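(* Let $\alpha=(\alpha_n)_{n\in\mathbb{N}}\in\ell^2$. The Rhaly operator $R_\alpha$ is bounded on $\ell^2$ if and only if the sequence $(\sigma_k)_{k\ge-1}$ is bounded. Moreover $$\frac{1}{\sqrt2}\sup_{h\ge-1}\sigma_h\le\|R_\alpha\|\le4\sqrt2\sup_{h\ge-1}\sigma_h.$$
   Context: $\mathbb{N}=\{0,1,2,\dots\}$; $\ell^2$ is the space of square-summable functions $\mathbb{N}\to\mathbb{C}$. The Rhaly operator is $(R_\alpha f)(k)=\alpha_k\sum_{j=0}^k f(j)$, with operator norm $\|R_\alpha\|=\sup_{\|f\|_2=1}\|R_\alpha f\|_2$ (possibly $+\infty$). Define $\sigma_{-1}=|\alpha_0|$ and, for $k\in\mathbb{N}$, $\sigma_k=\big(\sum_{j=2^k}^{2^{k+1}-1}(j+1)|\alpha_j|^2\big)^{1/2}$. *)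

theory Defs
  imports "HOL-Analysis.Analysis"
begin

definition is_l2 :: "(nat \<Rightarrow> complex) \<Rightarrow> bool" where
  "is_l2 f \<longleftrightarrow> summable (\<lambda>n. (norm (f n))^2)"

definition l2norm :: "(nat \<Rightarrow> complex) \<Rightarrow> real" where
  "l2norm f = sqrt (\<Sum>n. (norm (f n))^2)"

definition rhaly :: "(nat \<Rightarrow> complex) \<Rightarrow> (nat \<Rightarrow> complex) \<Rightarrow> nat \<Rightarrow> complex" where
  "rhaly \<alpha> f k = \<alpha> k * (\<Sum>j\<le>k. f j)"

definition rhaly_norm :: "(nat \<Rightarrow> complex) \<Rightarrow> ereal" where
  "rhaly_norm \<alpha> = (SUP f\<in>{f. is_l2 f \<and> l2norm f = 1}.
      (if is_l2 (rhaly \<alpha> f) then ereal (l2norm (rhaly \<alpha> f)) else \<infinity>))"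

definition sigma :: "(nat \<Rightarrow> complex) \<Rightarrow> int \<Rightarrow> real" where
  "sigma \<alpha> h = (if h = -1 then norm (\<alpha> 0)
     else sqrt (\<Sum>j\<in>{2^nat h..<2^(nat h + 1)}. real (j+1) * (norm (\<alpha> j))^2))"

end

theory Submission
  imports Defs
begin

text \<open>
  Lower bound: the test vector constant equal to \<open>1/\<surd>P\<close> on \<open>{..<P}\<close> is mapped by
  \<open>R\<^sub>\<alpha>\<close> to \<open>\<surd>P \<alpha>\<^sub>j\<close> for all \<open>j \<ge> P - 1\<close>; with \<open>P = 2\<^sup>m\<close> this captures \<open>\<sigma>\<^sub>m/\<surd>2\<close>.
  Upper bound: \<open>\<sigma>\<^sub>h \<le> M\<close> for all \<open>h\<close> gives \<open>\<Sum>\<^sub>j\<^sub>\<ge>\<^sub>n |\<alpha>\<^sub>j|\<^sup>2 \<le> 4M\<^sup>2/(n+1)\<close> by summing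
  over dyadic blocks, and a weighted discrete Hardy inequality turns such tail bounds on the
  weights \<open>|\<alpha>\<^sub>j|\<^sup>2\<close> into \<open>\<parallel>R\<^sub>\<alpha> f\<parallel> \<le> 4M \<parallel>f\<parallel>\<close>, which is slightly better than the constant
  \<open>4\<surd>2\<close> of the statement.
\<close>

lemma hardy_step_ineq:
  fixes n x y :: real
  assumes "n > 0"
  shows "(y / (n + 1))^2 - 2 * (y - x) * (y / (n + 1)) \<le> x^2 / n - y^2 / (n + 1)"
proof -
  define p A where "p = x / n" and "A = y / (n + 1)"
  have x: "x = n * p" and y: "y = (n + 1) * A"
    using assms by (simp_all add: p_def A_def)
  have "x^2 / n = n * p^2" and "y^2 / (n + 1) = (n + 1) * A^2"
    using assms by (simp_all add: x y power2_eq_square)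
  then have "x^2 / n - y^2 / (n + 1) - ((y / (n + 1))^2 - 2 * (y - x) * (y / (n + 1)))
      = n * (p - A)^2"
    by (simp add: A_def[symmetric]) (simp add: x y algebra_simps power2_eq_square)
  moreover have "0 \<le> n * (p - A)^2" using assms by simp
  ultimately show ?thesis by linarith
qed

lemma sum_mult_partial_sums_swap:
  fixes w d :: "nat \<Rightarrow> 'a::comm_semiring_0"
  shows "(\<Sum>j<N. w j * (\<Sum>i\<le>j. d i)) = (\<Sum>i<N. d i * (\<Sum>j\<in>{i..<N}. w j))"
proof (induction N)
  case (Suc N)
  have "(\<Sum>i<Suc N. d i * (\<Sum>j\<in>{i..<Suc N}. w j))
      = (\<Sum>i<Suc N. d i * (\<Sum>j\<in>{i..<N}. w j) + d i * w N)"
    by (rule sum.cong) (auto simp: distrib_left)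
  also have "\<dots> = (\<Sum>i<N. d i * (\<Sum>j\<in>{i..<N}. w j)) + w N * (\<Sum>i\<le>N. d i)"
    by (simp add: sum.distrib sum_distrib_left distrib_left mult.commute flip: lessThan_Suc_atMost)
  finally show ?case by (simp add: Suc)
qed simp

lemma hardy_means_sq_le:
  fixes a :: "nat \<Rightarrow> real"
  shows "(\<Sum>i<N. ((\<Sum>l\<le>i. a l) / real (Suc i))^2)
    \<le> 2 * (\<Sum>i<N. a i * ((\<Sum>l\<le>i. a l) / real (Suc i)))"
proof -
  define Q where "Q i = (\<Sum>l<i. a l)" for i
  define A where "A i = Q (Suc i) / real (Suc i)" for i
  \<comment> \<open>\<open>F 0 = 0\<close> because division by zero yields zero\<close>
  define F where "F i = (Q i)^2 / real i" for i
  have step: "(A i)^2 - 2 * a i * A i \<le> F i - F (Suc i)" for i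
  proof (cases "i = 0")
    case True
    then show ?thesis by (simp add: A_def F_def Q_def power2_eq_square)
  next
    case False
    have "a i = Q (Suc i) - Q i" by (simp add: Q_def)
    with hardy_step_ineq[where n="real i" and x="Q i" and y="Q (Suc i)"] False show ?thesis
      by (simp add: A_def F_def add.commute)
  qed
  have "(\<Sum>i<N. (A i)^2 - 2 * a i * A i) \<le> (\<Sum>i<N. F i - F (Suc i))"
    by (rule sum_mono) (rule step)
  also have "\<dots> = F 0 - F N" by (rule sum_lessThan_telescope')
  also have "\<dots> \<le> 0" by (simp add: F_def)
  finally show ?thesis
    by (simp add: A_def Q_def sum_subtractf sum_distrib_left mult.assoc lessThan_Suc_atMost)
qed

lemma hardy_mixed_sum_le:
  fixes a :: "nat \<Rightarrow> real"
  shows "(\<Sum>i<N. a i * ((\<Sum>l\<le>i. a l) / real (Suc i))) \<le> 2 * (\<Sum>i<N. (a i)^2)"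
proof -
  define A where "A i = (\<Sum>l\<le>i. a l) / real (Suc i)" for i
  have "a i * A i \<le> (a i)^2 + (A i)^2 / 4" for i
    using sum_squares_ge_zero[of "a i - A i / 2" 0] by (simp add: power2_eq_square algebra_simps)
  then have "(\<Sum>i<N. a i * A i) \<le> (\<Sum>i<N. (a i)^2 + (A i)^2 / 4)"
    by (rule sum_mono)
  also have "\<dots> = (\<Sum>i<N. (a i)^2) + (\<Sum>i<N. (A i)^2) / 4"
    by (simp add: sum.distrib sum_divide_distrib)
  finally show ?thesis using hardy_means_sq_le[of a N] by (simp add: A_def)
qed

lemma weighted_hardy_ineq:
  fixes a w :: "nat \<Rightarrow> real"
  assumes a_nonneg: "\<And>i. 0 \<le> a i"
    and tail: "\<And>n. (\<Sum>j\<in>{n..<N}. w j) \<le> K / real (Suc n)"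
  shows "(\<Sum>j<N. w j * (\<Sum>l\<le>j. a l)^2) \<le> 4 * K * (\<Sum>i<N. (a i)^2)"
proof -
  define S where "S i = (\<Sum>l<i. a l)" for i
  define Q where "Q i = (\<Sum>l\<le>i. a l)" for i
  define d where "d i = (Q i)^2 - (S i)^2" for i
  have "0 \<le> K" using tail[of N] by (simp add: zero_le_divide_iff)
  have S_nonneg: "0 \<le> S i" for i by (simp add: S_def a_nonneg sum_nonneg)
  have Q_eq: "Q i = S i + a i" for i by (simp add: S_def Q_def flip: lessThan_Suc_atMost)
  have d_nonneg: "0 \<le> d i" and d_le: "d i \<le> 2 * a i * Q i" for i
    using a_nonneg[of i] S_nonneg[of i] unfolding d_def Q_eq
    by (simp_all add: power2_eq_square algebra_simps)
  have Q_sq: "(Q j)^2 = (\<Sum>i\<le>j. d i)" for j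
    using sum_lessThan_telescope[of "\<lambda>i. (S i)^2" "Suc j"]
    by (simp add: d_def Q_def S_def lessThan_Suc_atMost)
  have "(\<Sum>j<N. w j * (Q j)^2) = (\<Sum>i<N. d i * (\<Sum>j\<in>{i..<N}. w j))"
    unfolding Q_sq by (rule sum_mult_partial_sums_swap)
  also have "\<dots> \<le> (\<Sum>i<N. (2 * a i * Q i) * (K / real (Suc i)))"
    by (intro sum_mono order_trans[OF mult_left_mono mult_right_mono] tail d_le d_nonneg)
      (simp_all add: \<open>0 \<le> K\<close> a_nonneg Q_def sum_nonneg)
  also have "\<dots> = 2 * K * (\<Sum>i<N. a i * (Q i / real (Suc i)))"
    by (simp add: sum_distrib_left mult_ac)
  also have "\<dots> \<le> 4 * K * (\<Sum>i<N. (a i)^2)"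
    using mult_left_mono[OF hardy_mixed_sum_le[of a N], of "2 * K"] \<open>0 \<le> K\<close>
    by (simp add: Q_def)
  finally show ?thesis by (simp add: Q_def)
qed

lemma dyadic_range_sum_le:
  fixes w :: "nat \<Rightarrow> real"
  assumes block: "\<And>m. (\<Sum>j\<in>{2^m..<2^(m+1)}. w j) \<le> C / 2^m"
  shows "(\<Sum>j\<in>{2^k..<2^(k+d)}. w j) \<le> 2 * C * (1 / 2^k - 1 / 2^(k+d))"
proof (induction d)
  case (Suc d)
  have "{2^k..<2^(k + Suc d)} = {2^k..<2^(k+d)} \<union> {2^(k+d)..<(2::nat)^(k+d+1)}"
    by (auto simp: ivl_disj_un)
  then have "(\<Sum>j\<in>{2^k..<2^(k + Suc d)}. w j)
      = (\<Sum>j\<in>{2^k..<2^(k+d)}. w j) + (\<Sum>j\<in>{2^(k+d)..<2^(k+d+1)}. w j)"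
    by (simp add: sum.union_disjoint)
  also have "\<dots> \<le> 2 * C * (1 / 2^k - 1 / 2^(k+d)) + C / 2^(k+d)"
    using Suc block[of "k+d"] by linarith
  also have "\<dots> = 2 * C * (1 / 2^k - 1 / 2^(k + Suc d))"
    by (simp add: field_simps)
  finally show ?case .
qed simp

lemma dyadic_tail_sum_le:
  fixes w :: "nat \<Rightarrow> real"
  assumes nonneg: "\<And>j. 0 \<le> w j" and w0: "w 0 \<le> C"
    and block: "\<And>m. (\<Sum>j\<in>{2^m..<2^(m+1)}. w j) \<le> C / 2^m"
  shows "(\<Sum>j\<in>{n..<N}. w j) \<le> 4 * C / real (Suc n)"
proof (cases "n = 0")
  case True
  have "(\<Sum>j\<in>{0..<N}. w j) \<le> (\<Sum>j\<in>{0..<2^N}. w j)"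
    using less_exp[of N] by (intro sum_mono2 nonneg) auto
  also have "\<dots> = w 0 + (\<Sum>j\<in>{2^0..<2^(0+N)}. w j)"
    by (simp add: sum.atLeast_Suc_lessThan)
  also have "\<dots> \<le> C + 2 * C * (1 / 2^0 - 1 / 2^(0+N))"
    using w0 dyadic_range_sum_le[OF block, of 0 N] by linarith
  also have "\<dots> \<le> 4 * C"
    using nonneg[of 0] w0 by (simp add: field_simps)
  finally show ?thesis using True by simp
next
  case False
  then obtain k where k: "2^k \<le> n" "n < 2^(k+1)"
    using ex_power_ivl1[of 2 n] by auto
  have "N < 2^(k+N)"
    using less_exp[of N] power_increasing[of N "k+N" "2::nat"] by linarith
  then have "(\<Sum>j\<in>{n..<N}. w j) \<le> (\<Sum>j\<in>{2^k..<2^(k+N)}. w j)"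
    using k by (intro sum_mono2 nonneg) auto
  also have "\<dots> \<le> 2 * C * (1 / 2^k - 1 / 2^(k+N))"
    by (rule dyadic_range_sum_le[OF block])
  also have "\<dots> \<le> 2 * C / 2^k"
    using nonneg[of 0] w0 by (simp add: field_simps)
  also have "\<dots> = 4 * C / 2^(k+1)" by simp
  also have "\<dots> \<le> 4 * C / real (Suc n)"
  proof (rule divide_left_mono)
    have "Suc n \<le> 2^(k+1)" using k by simp
    then show "real (Suc n) \<le> 2^(k+1)"
      by (metis of_nat_le_iff of_nat_numeral of_nat_power)
  qed (use nonneg[of 0] w0 in auto)
  finally show ?thesis .
qed

lemma l2norm_sq: "is_l2 f \<Longrightarrow> (l2norm f)^2 = (\<Sum>i. (cmod (f i))^2)"
  by (simp add: l2norm_def is_l2_def suminf_nonneg)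

lemma l2norm_nonneg: "is_l2 f \<Longrightarrow> 0 \<le> l2norm f"
  by (simp add: l2norm_def is_l2_def suminf_nonneg)

lemma sum_norm_sq_le_l2norm_sq:
  assumes "is_l2 f" "finite A"
  shows "(\<Sum>i\<in>A. (cmod (f i))^2) \<le> (l2norm f)^2"
  unfolding l2norm_sq[OF assms(1)]
  using assms by (intro sum_le_suminf) (auto simp: is_l2_def)

lemma l2norm_le_if_partial_sums_le:
  assumes partial: "\<And>N. (\<Sum>i<N. (cmod (g i))^2) \<le> B^2" and "0 \<le> B"
  shows "is_l2 g \<and> l2norm g \<le> B"
proof
  show "is_l2 g" unfolding is_l2_def
    by (rule summableI_nonneg_bounded[OF _ partial]) simp
  then have "(\<Sum>i. (cmod (g i))^2) \<le> B^2"
    by (intro suminf_le_const partial) (simp add: is_l2_def)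
  then show "l2norm g \<le> B"
    using \<open>0 \<le> B\<close> by (simp add: l2norm_def real_sqrt_le_iff real_le_lsqrt)
qed

lemma rhaly_norm_geI:
  assumes "is_l2 f" "l2norm f = 1" "is_l2 (rhaly \<alpha> f) \<Longrightarrow> c \<le> l2norm (rhaly \<alpha> f)"
  shows "ereal c \<le> rhaly_norm \<alpha>"
  unfolding rhaly_norm_def by (rule SUP_upper2[of f]) (use assms in auto)

lemma rhaly_norm_leI:
  assumes "\<And>f. is_l2 f \<Longrightarrow> l2norm f = 1 \<Longrightarrow> is_l2 (rhaly \<alpha> f) \<and> l2norm (rhaly \<alpha> f) \<le> B"
  shows "rhaly_norm \<alpha> \<le> ereal B"
  unfolding rhaly_norm_def by (rule SUP_least) (use assms in auto)

lemma rhaly_l2norm_le: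
  assumes tail: "\<And>n N. (\<Sum>j\<in>{n..<N}. (cmod (\<alpha> j))^2) \<le> C / real (Suc n)"
    and "is_l2 f"
  shows "is_l2 (rhaly \<alpha> f) \<and> l2norm (rhaly \<alpha> f) \<le> 2 * sqrt C * l2norm f"
proof (rule l2norm_le_if_partial_sums_le)
  have "0 \<le> C" using tail[of 0 0] by simp
  fix N
  have "(\<Sum>k<N. (cmod (rhaly \<alpha> f k))^2)
      \<le> (\<Sum>k<N. (cmod (\<alpha> k))^2 * (\<Sum>l\<le>k. cmod (f l))^2)"
    unfolding rhaly_def norm_mult power_mult_distrib
    by (intro sum_mono mult_left_mono power_mono norm_sum) auto
  also have "\<dots> \<le> 4 * C * (\<Sum>i<N. (cmod (f i))^2)"
    by (rule weighted_hardy_ineq) (simp, rule tail)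
  also have "\<dots> \<le> 4 * C * (l2norm f)^2"
    using \<open>0 \<le> C\<close> sum_norm_sq_le_l2norm_sq[OF \<open>is_l2 f\<close>] by (simp add: mult_left_mono)
  also have "\<dots> = (2 * sqrt C * l2norm f)^2"
    using \<open>0 \<le> C\<close> by (simp add: power_mult_distrib)
  finally show "(\<Sum>k<N. (cmod (rhaly \<alpha> f k))^2) \<le> (2 * sqrt C * l2norm f)^2" .
  show "0 \<le> 2 * sqrt C * l2norm f"
    using \<open>0 \<le> C\<close> l2norm_nonneg[OF \<open>is_l2 f\<close>] by simp
qed

lemma rhaly_norm_ge_sqrt_sum:
  assumes "0 < P" "finite J" and J: "\<And>j. j \<in> J \<Longrightarrow> P \<le> Suc j"
  shows "ereal (sqrt (real P * (\<Sum>j\<in>J. (cmod (\<alpha> j))^2))) \<le> rhaly_norm \<alpha>"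
proof -
  define c :: "nat \<Rightarrow> real" where "c i = (if i < P then 1 / sqrt (real P) else 0)" for i
  define f :: "nat \<Rightarrow> complex" where "f i = of_real (c i)" for i
  have f_sq: "(\<lambda>i. (cmod (f i))^2) = (\<lambda>i. if i < P then 1 / real P else 0)"
    using \<open>0 < P\<close> by (auto simp: f_def c_def power_divide)
  have "is_l2 f" unfolding is_l2_def f_sq
    by (rule summable_finite[of "{..<P}"]) auto
  moreover have "l2norm f = 1" unfolding l2norm_def f_sq
    using \<open>0 < P\<close> by (subst suminf_finite[of "{..<P}"]) auto
  moreover have "(cmod (rhaly \<alpha> f j))^2 = real P * (cmod (\<alpha> j))^2" if "j \<in> J" for j
  proof -
    have "(\<Sum>i\<le>j. c i) = (\<Sum>i<P. 1 / sqrt (real P))"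
      unfolding c_def using J[OF that] by (intro sum.mono_neutral_cong_right) auto
    also have "\<dots> = sqrt (real P)"
      using \<open>0 < P\<close> by (simp add: real_div_sqrt)
    finally show ?thesis by (simp add: rhaly_def f_def norm_mult power_mult_distrib flip: of_real_sum)
  qed
  then have "sqrt (real P * (\<Sum>j\<in>J. (cmod (\<alpha> j))^2)) = sqrt (\<Sum>j\<in>J. (cmod (rhaly \<alpha> f j))^2)"
    by (simp add: sum_distrib_left)
  then have "sqrt (real P * (\<Sum>j\<in>J. (cmod (\<alpha> j))^2)) \<le> l2norm (rhaly \<alpha> f)"
    if "is_l2 (rhaly \<alpha> f)"
    using sum_norm_sq_le_l2norm_sq[OF that \<open>finite J\<close>] l2norm_nonneg[OF that]
    by (simp add: real_le_lsqrt)
  ultimately show ?thesis by (rule rhaly_norm_geI)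
qed

lemma sigma_nonneg: "0 \<le> sigma \<alpha> h"
  by (simp add: sigma_def sum_nonneg)

lemma sigma_dyadic_block_le:
  assumes "sigma \<alpha> (int m) \<le> M"
  shows "(\<Sum>j\<in>{2^m..<2^(m+1)}. (cmod (\<alpha> j))^2) \<le> M^2 / 2^m"
proof -
  have "2^m * (\<Sum>j\<in>{2^m..<2^(m+1)}. (cmod (\<alpha> j))^2)
      \<le> (\<Sum>j\<in>{2^m..<2^(m+1)}. real (j+1) * (cmod (\<alpha> j))^2)"
    unfolding sum_distrib_left
  proof (rule sum_mono)
    fix j assume "j \<in> {2^m..<(2::nat)^(m+1)}"
    then have "(2::real)^m \<le> real (j+1)"
      by (metis atLeastLessThan_iff le_SucI of_nat_le_iff of_nat_numeral of_nat_power Suc_eq_plus1)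
    then show "2^m * (cmod (\<alpha> j))^2 \<le> real (j+1) * (cmod (\<alpha> j))^2"
      by (rule mult_right_mono) simp
  qed
  also have "\<dots> \<le> M^2"
    using assms by (intro sqrt_le_D) (simp add: sigma_def)
  finally show ?thesis by (simp add: field_simps)
qed

lemma sigma_bound_tail_le:
  assumes "\<And>h. h \<ge> -1 \<Longrightarrow> sigma \<alpha> h \<le> M"
  shows "(\<Sum>j\<in>{n..<N}. (cmod (\<alpha> j))^2) \<le> 4 * M^2 / real (Suc n)"
proof (rule dyadic_tail_sum_le)
  have "cmod (\<alpha> 0) \<le> M" using assms[of "-1"] by (simp add: sigma_def)
  then show "(cmod (\<alpha> 0))^2 \<le> M^2" by (simp add: power_mono)
  show "(\<Sum>j\<in>{2^m..<2^(m+1)}. (cmod (\<alpha> j))^2) \<le> M^2 / 2^m" for m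
    using assms[of "int m"] by (intro sigma_dyadic_block_le) simp
qed simp

lemma rhaly_norm_le_sigma_bound:
  assumes "\<And>h. h \<ge> -1 \<Longrightarrow> sigma \<alpha> h \<le> M"
  shows "rhaly_norm \<alpha> \<le> ereal (4 * M)"
proof (rule rhaly_norm_leI)
  have "0 \<le> M" using assms[of "-1"] sigma_nonneg[of \<alpha> "-1"] by simp
  then have "2 * sqrt (4 * M^2) = 4 * M" by (simp add: real_sqrt_mult)
  then show "is_l2 (rhaly \<alpha> f) \<and> l2norm (rhaly \<alpha> f) \<le> 4 * M"
    if "is_l2 f" "l2norm f = 1" for f
    using rhaly_l2norm_le[OF sigma_bound_tail_le[OF assms] that(1)] that(2) by simp
qed

lemma sigma_le_sqrt2_rhaly_norm:
  assumes "h \<ge> -1"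
  shows "ereal (sigma \<alpha> h / sqrt 2) \<le> rhaly_norm \<alpha>"
proof (cases "h = -1")
  case True
  have "sigma \<alpha> h / sqrt 2 \<le> sigma \<alpha> h"
    using sigma_nonneg[of \<alpha> h] by (simp add: divide_le_eq mult_le_cancel_left1)
  also have "\<dots> = sqrt (real 1 * (\<Sum>j\<in>{0}. (cmod (\<alpha> j))^2))"
    using True by (simp add: sigma_def)
  also have "ereal \<dots> \<le> rhaly_norm \<alpha>" by (rule rhaly_norm_ge_sqrt_sum) auto
  finally show ?thesis by simp
next
  case False
  define m where "m = nat h"
  have h: "h = int m" using assms False by (simp add: m_def)
  have "sigma \<alpha> h / sqrt 2 = sqrt ((\<Sum>j\<in>{2^m..<2^(m+1)}. real (j+1) * (cmod (\<alpha> j))^2) / 2)"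
    by (simp add: h sigma_def real_sqrt_divide)
  also have "\<dots> \<le> sqrt (real (2^m) * (\<Sum>j\<in>{2^m..<2^(m+1)}. (cmod (\<alpha> j))^2))"
    unfolding real_sqrt_le_iff sum_divide_distrib sum_distrib_left
  proof (rule sum_mono)
    fix j assume "j \<in> {2^m..<(2::nat)^(m+1)}"
    then have "j + 1 \<le> 2 * 2^m" by simp
    then have "real (j + 1) \<le> 2 * 2^m" by (simp only: of_nat_le_iff[symmetric, where 'a=real]) simp
    then show "real (j+1) * (cmod (\<alpha> j))^2 / 2 \<le> real (2^m) * (cmod (\<alpha> j))^2"
      using mult_right_mono[of "real (j+1)" "2 * 2^m" "(cmod (\<alpha> j))^2"] by simp
  qed
  also have "ereal \<dots> \<le> rhaly_norm \<alpha>" by (rule rhaly_norm_ge_sqrt_sum) auto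
  finally show ?thesis by simp
qed

lemma bdd_above_image_iff_SUP_ereal_less_top:
  fixes f :: "'a \<Rightarrow> real"
  shows "bdd_above (f ` A) \<longleftrightarrow> (SUP x\<in>A. ereal (f x)) < \<infinity>"
proof
  assume "bdd_above (f ` A)"
  then obtain M where "\<And>x. x \<in> A \<Longrightarrow> f x \<le> M" by (auto simp: bdd_above_def)
  then have "(SUP x\<in>A. ereal (f x)) \<le> ereal M" by (intro SUP_least) simp
  then show "(SUP x\<in>A. ereal (f x)) < \<infinity>" by (rule le_less_trans) simp
next
  assume "(SUP x\<in>A. ereal (f x)) < \<infinity>"
  then obtain M where M: "(SUP x\<in>A. ereal (f x)) \<le> ereal M"
    by (cases "SUP x\<in>A. ereal (f x)") auto
  have "f x \<le> M" if "x \<in> A" for x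
    using order_trans[OF SUP_upper[OF that] M] by simp
  then show "bdd_above (f ` A)" by (intro bdd_aboveI) auto
qed

lemma SUP_sigma_le_sqrt2_rhaly_norm:
  "ereal (1 / sqrt 2) * (SUP h\<in>{-1..}. ereal (sigma \<alpha> h)) \<le> rhaly_norm \<alpha>"
proof -
  have "ereal (1 / sqrt 2) * (SUP h\<in>{-1..}. ereal (sigma \<alpha> h))
      = (SUP h\<in>{-1..}. ereal (sigma \<alpha> h / sqrt 2))"
    by (subst SUP_ereal_mult_left[symmetric]) (auto simp: sigma_nonneg)
  also have "\<dots> \<le> rhaly_norm \<alpha>"
    by (intro SUP_least sigma_le_sqrt2_rhaly_norm) simp
  finally show ?thesis .
qed

lemma rhaly_norm_le_4_SUP_sigma:
  "rhaly_norm \<alpha> \<le> ereal 4 * (SUP h\<in>{-1..}. ereal (sigma \<alpha> h))"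
proof (cases "SUP h\<in>{-1..}. ereal (sigma \<alpha> h)")
  case (real s)
  then have "sigma \<alpha> h \<le> s" if "h \<ge> -1" for h
    using SUP_upper[of h "{-1..}" "\<lambda>h. ereal (sigma \<alpha> h)"] that by simp
  then show ?thesis using real rhaly_norm_le_sigma_bound by simp
next
  case PInf
  then show ?thesis by simp
next
  case MInf
  then show ?thesis
    using SUP_upper[of "-1" "{-1..}" "\<lambda>h. ereal (sigma \<alpha> h)"] by simp
qed

theorem theorem2p4:
  fixes \<alpha> :: "nat \<Rightarrow> complex"
  assumes "is_l2 \<alpha>"
  shows "(rhaly_norm \<alpha> < \<infinity> \<longleftrightarrow> bdd_above (sigma \<alpha> ` {-1..}))
    \<and> ereal (1 / sqrt 2) * (SUP h\<in>{-1..}. ereal (sigma \<alpha> h)) \<le> rhaly_norm \<alpha>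
    \<and> rhaly_norm \<alpha> \<le> ereal (4 * sqrt 2) * (SUP h\<in>{-1..}. ereal (sigma \<alpha> h))"
proof -
  define S where "S = (SUP h\<in>{-1..}. ereal (sigma \<alpha> h))"
  have lower: "ereal (1 / sqrt 2) * S \<le> rhaly_norm \<alpha>"
    unfolding S_def by (rule SUP_sigma_le_sqrt2_rhaly_norm)
  have upper: "rhaly_norm \<alpha> \<le> ereal 4 * S"
    unfolding S_def by (rule rhaly_norm_le_4_SUP_sigma)
  have "0 \<le> S"
    unfolding S_def by (rule order_trans[OF _ SUP_upper[of "-1"]]) (simp_all add: sigma_nonneg)
  then have "ereal 4 * S \<le> ereal (4 * sqrt 2) * S"
    by (intro ereal_mult_right_mono) auto
  moreover have "rhaly_norm \<alpha> < \<infinity> \<longleftrightarrow> S < \<infinity>"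
  proof
    assume "rhaly_norm \<alpha> < \<infinity>"
    then show "S < \<infinity>" using lower by (cases S) auto
  next
    assume "S < \<infinity>"
    then show "rhaly_norm \<alpha> < \<infinity>" using upper by (cases S) auto
  qed
  ultimately show ?thesis
    using lower upper by (auto simp: S_def bdd_above_image_iff_SUP_ereal_less_top)
qed

end
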